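(* Let $P$ be a continuous $L$-ordered set. Then $({\rm pt}_L\sigma_L(P),{\rm sub}_{\sigma_L(P)})$, together with the map $\eta_P:P\to{\rm pt}_L\sigma_L(P)$, $x\mapsto[x]$, is a directed completion of $P$.
   Context: $L$ is a frame with implication $\to$. $L$-subsets of $X$ are maps $X\to L$; nonempty means $\bigvee_xA(x)=1$; ${\rm sub}_X(A,B)=\bigwedge_xA(x)\to B(x)$; $f^\rightarrow(A)(y)=\bigvee_{f(x)=y}A(x)$. An $L$-order on $P$: $e:P\times P\to L$ with $e(x,x)=1$, $e(x,y)\wedge e(y,z)\le e(x,z)$, $e(x,y)\wedge e(y,x)=1\Rightarrow x=y$. ${\downarrow}y(x)=e(x,y)$. $x=\sqcup A$ if $e(x,y)={\rm sub}_P(A,{\downarrow}y)$ for all $y$. Directed: nonempty and $D(x)\wedge D(y)\le\bigvee_zD(z)\wedge e(x,z)\wedge e(y,z)$; ideal = directed lower set. $L$-dcpo: every directed $L$-subset has a supremum. Scott continuous $f$: for each directed $D$ with a supremum, $f^\rightarrow(D)$ has a supremum equal to $f(\sqcup D)$. ${\Downarrow}x(y)=\bigwedge\{e(x,\sqcup I)\to I(y): I\text{ ideal with a supremum}\}$; $P$ is a continuous $L$-ordered set if each ${\Downarrow}x$ is directed with supremum $x$; a continuous $L$-dcpo is a continuous $L$-ordered set that is an $L$-dcpo. $\sigma_L(P)$ (Scott $L$-topology) is the set of $A\in L^P$ that are upper sets ($A(x)\wedge e(x,y)\le A(y)$) with $A(\sqcup D)=\bigvee_xA(x)\wedge D(x)$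 for every directed $D$ having a supremum. ${\rm pt}_L\sigma_L(P)$ is the set of maps $p:\sigma_L(P)\to L$ preserving binary meets and arbitrary joins and with $p(\lambda_P)=\lambda$ for every constant $\lambda_P$; it is $L$-ordered by ${\rm sub}_{\sigma_L(P)}(p,q)=\bigwedge_{A\in\sigma_L(P)}p(A)\to q(A)$. $[x](A)=A(x)$. A directed completion of a continuous $L$-ordered set $P$ is a continuous $L$-dcpo $Q$ with a Scott continuous $j:P\to Q$ such that for every continuous $L$-dcpo $M$ and Scott continuous $f:P\to M$ there is a unique Scott continuous $\bar f:Q\to M$ with $\bar f\circ j=f$. *)

theory Defs
  imports Main
begin

class frame = complete_lattice +
  assumes inf_Sup_frame: "inf a (Sup S) = Sup ((\<lambda>b. inf a b) ` S)"

definition limp :: "'l::frame \<Rightarrow> 'l \<Rightarrow> 'l" where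
  "limp a b = Sup {c. inf c a \<le> b}"

definition Lnonempty :: "'a set \<Rightarrow> ('a \<Rightarrow> 'l::frame) \<Rightarrow> bool" where
  "Lnonempty X A \<longleftrightarrow> (SUP x\<in>X. A x) = top"

definition Lsub :: "'a set \<Rightarrow> ('a \<Rightarrow> 'l::frame) \<Rightarrow> ('a \<Rightarrow> 'l) \<Rightarrow> 'l" where
  "Lsub X A B = (INF x\<in>X. limp (A x) (B x))"

definition Limg :: "'a set \<Rightarrow> ('a \<Rightarrow> 'b) \<Rightarrow> ('a \<Rightarrow> 'l::frame) \<Rightarrow> 'b \<Rightarrow> 'l" where
  "Limg X f A y = (SUP x\<in>{x\<in>X. f x = y}. A x)"

definition Lorder :: "'a set \<Rightarrow> ('a \<Rightarrow> 'a \<Rightarrow> 'l::frame) \<Rightarrow> bool" where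
  "Lorder X e \<longleftrightarrow>
     (\<forall>x\<in>X. e x x = top) \<and>
     (\<forall>x\<in>X. \<forall>y\<in>X. \<forall>z\<in>X. inf (e x y) (e y z) \<le> e x z) \<and>
     (\<forall>x\<in>X. \<forall>y\<in>X. inf (e x y) (e y x) = top \<longrightarrow> x = y)"

definition Ldown :: "('a \<Rightarrow> 'a \<Rightarrow> 'l::frame) \<Rightarrow> 'a \<Rightarrow> 'a \<Rightarrow> 'l" where
  "Ldown e y = (\<lambda>x. e x y)"

definition is_Lsup :: "'a set \<Rightarrow> ('a \<Rightarrow> 'a \<Rightarrow> 'l::frame) \<Rightarrow> ('a \<Rightarrow> 'l) \<Rightarrow> 'a \<Rightarrow> bool" where
  "is_Lsup X e A x \<longleftrightarrow> x \<in> X \<and> (\<forall>y\<in>X. e x y = Lsub X A (Ldown e y))"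

definition Ldirected :: "'a set \<Rightarrow> ('a \<Rightarrow> 'a \<Rightarrow> 'l::frame) \<Rightarrow> ('a \<Rightarrow> 'l) \<Rightarrow> bool" where
  "Ldirected X e D \<longleftrightarrow> Lnonempty X D \<and>
     (\<forall>x\<in>X. \<forall>y\<in>X. inf (D x) (D y) \<le> (SUP z\<in>X. inf (D z) (inf (e x z) (e y z))))"

definition Llower :: "'a set \<Rightarrow> ('a \<Rightarrow> 'a \<Rightarrow> 'l::frame) \<Rightarrow> ('a \<Rightarrow> 'l) \<Rightarrow> bool" where
  "Llower X e A \<longleftrightarrow> (\<forall>x\<in>X. \<forall>y\<in>X. inf (A x) (e y x) \<le> A y)"

definition Lupper :: "'a set \<Rightarrow> ('a \<Rightarrow> 'a \<Rightarrow> 'l::frame) \<Rightarrow> ('a \<Rightarrow> 'l) \<Rightarrow> bool" where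
  "Lupper X e A \<longleftrightarrow> (\<forall>x\<in>X. \<forall>y\<in>X. inf (A x) (e x y) \<le> A y)"

definition Lideal :: "'a set \<Rightarrow> ('a \<Rightarrow> 'a \<Rightarrow> 'l::frame) \<Rightarrow> ('a \<Rightarrow> 'l) \<Rightarrow> bool" where
  "Lideal X e I \<longleftrightarrow> Ldirected X e I \<and> Llower X e I"

definition Ldcpo :: "'a set \<Rightarrow> ('a \<Rightarrow> 'a \<Rightarrow> 'l::frame) \<Rightarrow> bool" where
  "Ldcpo X e \<longleftrightarrow> Lorder X e \<and> (\<forall>D. Ldirected X e D \<longrightarrow> (\<exists>x. is_Lsup X e D x))"

definition scott_cont ::
  "'a set \<Rightarrow> ('a \<Rightarrow> 'a \<Rightarrow> 'l::frame) \<Rightarrow> 'b set \<Rightarrow> ('b \<Rightarrow> 'b \<Rightarrow> 'l) \<Rightarrow> ('a \<Rightarrow> 'b) \<Rightarrow> bool" where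
  "scott_cont X e Y e' f \<longleftrightarrow> (\<forall>x\<in>X. f x \<in> Y) \<and>
     (\<forall>D s. Ldirected X e D \<and> is_Lsup X e D s \<longrightarrow> is_Lsup Y e' (Limg X f D) (f s))"

definition Lwaybelow :: "'a set \<Rightarrow> ('a \<Rightarrow> 'a \<Rightarrow> 'l::frame) \<Rightarrow> 'a \<Rightarrow> 'a \<Rightarrow> 'l" where
  "Lwaybelow X e x y = Inf {limp (e x s) (I y) | I s. Lideal X e I \<and> is_Lsup X e I s}"

definition cont_Lordered :: "'a set \<Rightarrow> ('a \<Rightarrow> 'a \<Rightarrow> 'l::frame) \<Rightarrow> bool" where
  "cont_Lordered X e \<longleftrightarrow> Lorder X e \<and>
     (\<forall>x\<in>X. Ldirected X e (Lwaybelow X e x) \<and> is_Lsup X e (Lwaybelow X e x) x)"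

definition cont_Ldcpo :: "'a set \<Rightarrow> ('a \<Rightarrow> 'a \<Rightarrow> 'l::frame) \<Rightarrow> bool" where
  "cont_Ldcpo X e \<longleftrightarrow> cont_Lordered X e \<and> Ldcpo X e"

text \<open>L-subsets of X are represented by functions that are bottom outside X.\<close>
definition sigmaL :: "'a set \<Rightarrow> ('a \<Rightarrow> 'a \<Rightarrow> 'l::frame) \<Rightarrow> ('a \<Rightarrow> 'l) set" where
  "sigmaL X e = {A. (\<forall>x. x \<notin> X \<longrightarrow> A x = bot) \<and> Lupper X e A \<and>
     (\<forall>D s. Ldirected X e D \<and> is_Lsup X e D s \<longrightarrow> A s = (SUP x\<in>X. inf (A x) (D x)))}"

definition const_on :: "'a set \<Rightarrow> 'l::frame \<Rightarrow> 'a \<Rightarrow> 'l" where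
  "const_on X c = (\<lambda>x. if x \<in> X then c else bot)"

definition ptL :: "'a set \<Rightarrow> ('a \<Rightarrow> 'a \<Rightarrow> 'l::frame) \<Rightarrow> (('a \<Rightarrow> 'l) \<Rightarrow> 'l) set" where
  "ptL X e = {p. (\<forall>A. A \<notin> sigmaL X e \<longrightarrow> p A = bot) \<and>
     (\<forall>A\<in>sigmaL X e. \<forall>B\<in>sigmaL X e. p (inf A B) = inf (p A) (p B)) \<and>
     (\<forall>S. S \<subseteq> sigmaL X e \<longrightarrow> p (Sup S) = Sup (p ` S)) \<and>
     (\<forall>c. p (const_on X c) = c)}"

definition subPt :: "'a set \<Rightarrow> ('a \<Rightarrow> 'a \<Rightarrow> 'l::frame) \<Rightarrow>
    (('a \<Rightarrow> 'l) \<Rightarrow> 'l) \<Rightarrow> (('a \<Rightarrow> 'l) \<Rightarrow> 'l) \<Rightarrow> 'l" where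
  "subPt X e p q = (INF A\<in>sigmaL X e. limp (p A) (q A))"

definition etaP :: "'a set \<Rightarrow> ('a \<Rightarrow> 'a \<Rightarrow> 'l::frame) \<Rightarrow> 'a \<Rightarrow> ('a \<Rightarrow> 'l) \<Rightarrow> 'l" where
  "etaP X e x = (\<lambda>A. if A \<in> sigmaL X e then A x else bot)"

text \<open>Universal property, with target continuous L-dcpos ranging over carriers in type 'm.
  The theorem is stated for an arbitrary (schematic) type 'm, i.e. for all continuous L-dcpos.\<close>
definition directed_completion ::
  "'a set \<Rightarrow> ('a \<Rightarrow> 'a \<Rightarrow> 'l::frame) \<Rightarrow> 'q set \<Rightarrow> ('q \<Rightarrow> 'q \<Rightarrow> 'l) \<Rightarrow> ('a \<Rightarrow> 'q) \<Rightarrow> 'm itself \<Rightarrow> bool" where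
  "directed_completion X e Q eQ j _ \<longleftrightarrow>
     cont_Ldcpo Q eQ \<and> scott_cont X e Q eQ j \<and>
     (\<forall>(M::'m set) (eM :: 'm \<Rightarrow> 'm \<Rightarrow> 'l) f.
        cont_Ldcpo M eM \<and> scott_cont X e M eM f \<longrightarrow>
        (\<exists>g. scott_cont Q eQ M eM g \<and> (\<forall>x\<in>X. g (j x) = f x) \<and>
           (\<forall>h. scott_cont Q eQ M eM h \<and> (\<forall>x\<in>X. h (j x) = f x) \<longrightarrow> (\<forall>q\<in>Q. h q = g q))))"

end

theory Submission
  imports Defs
begin

text \<open>
  For a continuous \<open>L\<close>-ordered set \<open>P\<close>, interpolation makes every way-above set \<open>\<Up>x\<close> Scott open,
  and every Scott open \<open>A\<close> is the join of the opens \<open>\<Up>x \<and> A(x)\<close>. Hence a point \<open>p\<close> is determined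
  by the directed \<open>L\<close>-subset \<open>x \<mapsto> p(\<Up>x)\<close> of \<open>P\<close>, and \<open>p\<close> is the supremum of its image under
  \<open>\<eta>\<close>. The points form an \<open>L\<close>-dcpo whose directed joins are computed pointwise, and the
  degree to which \<open>q\<close> is way below \<open>p\<close> is \<open>\<Squnion>\<^sub>x p(\<Up>x) \<and> sub(q, [x])\<close>, so the points form a
  continuous \<open>L\<close>-dcpo. A Scott continuous \<open>f : P \<rightarrow> M\<close> extends to \<open>p \<mapsto> \<Squnion> f\<^sup>\<rightarrow>(x \<mapsto> p(\<Up>x))\<close>,
  and any Scott continuous extension agrees with it because it preserves the supremum
  \<open>p = \<Squnion> \<eta>\<^sup>\<rightarrow>(x \<mapsto> p(\<Up>x))\<close>.
\<close>

section \<open>Implication in frames\<close>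

lemma le_limp_iff: "(c::'l::frame) \<le> limp a b \<longleftrightarrow> inf c a \<le> b"
proof
  assume "c \<le> limp a b"
  hence "inf c a \<le> inf a (limp a b)" by (metis inf_commute inf_mono order_refl)
  also have "\<dots> = Sup ((\<lambda>d. inf a d) ` {d. inf d a \<le> b})" unfolding limp_def by (rule inf_Sup_frame)
  also have "\<dots> \<le> b" by (auto intro!: Sup_least simp: inf_commute)
  finally show "inf c a \<le> b" .
next
  assume "inf c a \<le> b"
  thus "c \<le> limp a b" unfolding limp_def by (auto intro: Sup_upper)
qed

lemma limpI: "inf (c::'l::frame) a \<le> b \<Longrightarrow> c \<le> limp a b"
  by (simp add: le_limp_iff)

lemma inf_limp_le: "inf (limp a b) (a::'l::frame) \<le> b"
  by (simp add: le_limp_iff[symmetric])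

lemma limp_top_left [simp]: "limp top (b::'l::frame) = b"
  by (rule antisym) (metis inf_top_right inf_limp_le, simp add: le_limp_iff)

lemma limp_self [simp]: "limp (a::'l::frame) a = top"
  by (rule top_unique[THEN iffD1], rule limpI) simp

lemma top_le_limpD: "top \<le> limp a (b::'l::frame) \<Longrightarrow> a \<le> b"
  by (simp add: le_limp_iff)

lemma limp_mono: "a' \<le> a \<Longrightarrow> b \<le> b' \<Longrightarrow> limp a b \<le> limp (a'::'l::frame) b'"
  by (rule limpI) (meson inf_mono inf_limp_le order.trans order_refl)

lemma inf_SUP_frame: "inf (a::'l::frame) (SUP i\<in>I. f i) = (SUP i\<in>I. inf a (f i))"
  by (simp add: inf_Sup_frame image_comp)

lemma SUP_inf_frame: "inf (SUP i\<in>I. f i) (a::'l::frame) = (SUP i\<in>I. inf (f i) a)"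
  using inf_SUP_frame[of a f I] by (simp add: inf_commute)

lemma limp_SUP_left: "limp (SUP i\<in>I. f i) (b::'l::frame) = (INF i\<in>I. limp (f i) b)"
proof (rule antisym)
  show "limp (SUP i\<in>I. f i) b \<le> (INF i\<in>I. limp (f i) b)"
    by (auto intro!: INF_greatest limpI intro: order_trans[OF _ inf_limp_le] inf_mono SUP_upper)
  have "inf (INF i\<in>I. limp (f i) b) (SUP i\<in>I. f i) \<le> b"
    unfolding inf_SUP_frame
    by (auto intro!: SUP_least intro: order_trans[OF _ inf_limp_le[of "f _" b]] inf_mono INF_lower)
  thus "(INF i\<in>I. limp (f i) b) \<le> limp (SUP i\<in>I. f i) b" by (rule limpI)
qed

lemma limp_INF_right: "limp a (INF i\<in>I. f i) = (INF i\<in>I. limp (a::'l::frame) (f i))"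
proof (rule antisym)
  show "limp a (INF i\<in>I. f i) \<le> (INF i\<in>I. limp a (f i))"
    by (auto intro!: INF_greatest limpI intro: order_trans[OF inf_limp_le] INF_lower)
  have "inf (INF i\<in>I. limp a (f i)) a \<le> f i" if "i \<in> I" for i
    using that by (meson INF_lower inf_limp_le inf_mono order_refl order_trans)
  thus "(INF i\<in>I. limp a (f i)) \<le> limp a (INF i\<in>I. f i)" by (auto intro!: limpI INF_greatest)
qed

lemma limp_inf_left: "limp (inf a b) c = limp (a::'l::frame) (limp b c)"
proof (rule order_antisym)
  show "limp (inf a b) c \<le> limp a (limp b c)" by (simp add: le_limp_iff inf_assoc inf_limp_le)
  have "inf (limp a (limp b c)) (inf a b) \<le> inf (limp b c) b"
    unfolding inf_assoc[symmetric] by (intro inf_mono inf_limp_le order_refl)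
  also have "\<dots> \<le> c" by (rule inf_limp_le)
  finally show "limp a (limp b c) \<le> limp (inf a b) c" by (rule limpI)
qed

section \<open>\<open>L\<close>-ordered sets\<close>

lemma Lorder_refl: "Lorder X e \<Longrightarrow> x \<in> X \<Longrightarrow> e x x = top"
  by (simp add: Lorder_def)

lemma Lorder_trans: "Lorder X e \<Longrightarrow> x \<in> X \<Longrightarrow> y \<in> X \<Longrightarrow> z \<in> X \<Longrightarrow> inf (e x y) (e y z) \<le> e x z"
  by (simp add: Lorder_def)

lemma Lorder_eqI:
  assumes "Lorder X e" "s \<in> X" "t \<in> X" "\<And>y. y \<in> X \<Longrightarrow> e s y = e t y"
  shows "s = t"
proof -
  have "e s t = top" using assms(4)[OF assms(3)] Lorder_refl[OF assms(1,3)] by simp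
  moreover have "e t s = top" using assms(4)[OF assms(2)] Lorder_refl[OF assms(1,2)] by simp
  ultimately show ?thesis using assms(1-3) by (simp add: Lorder_def)
qed

lemma is_Lsup_iff: "is_Lsup X e A s \<longleftrightarrow> s \<in> X \<and> (\<forall>y\<in>X. e s y = (INF x\<in>X. limp (A x) (e x y)))"
  by (simp add: is_Lsup_def Lsub_def Ldown_def)

lemma is_Lsup_in: "is_Lsup X e A s \<Longrightarrow> s \<in> X"
  by (simp add: is_Lsup_iff)

lemma is_Lsup_upper:
  assumes "Lorder X e" "is_Lsup X e A s" "x \<in> X"
  shows "A x \<le> e x s"
proof -
  have s: "s \<in> X" using assms(2) by (rule is_Lsup_in)
  have "top = (INF x\<in>X. limp (A x) (e x s))"
    using assms(2) s Lorder_refl[OF assms(1) s] by (simp add: is_Lsup_iff)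
  also have "\<dots> \<le> limp (A x) (e x s)" using assms(3) by (rule INF_lower)
  finally show ?thesis by (rule top_le_limpD)
qed

lemma is_LsupI:
  assumes "Lorder X e" "s \<in> X" "\<And>x. x \<in> X \<Longrightarrow> A x \<le> e x s"
    "\<And>y. y \<in> X \<Longrightarrow> (INF x\<in>X. limp (A x) (e x y)) \<le> e s y"
  shows "is_Lsup X e A s"
  unfolding is_Lsup_iff
proof (intro conjI ballI assms(2) order_antisym assms(4) INF_greatest limpI)
  fix x y assume x: "x \<in> X" and y: "y \<in> X"
  have "inf (e s y) (A x) \<le> inf (e x s) (e s y)" using assms(3)[OF x] by (simp add: le_infI1 le_infI2)
  also have "\<dots> \<le> e x y" using Lorder_trans[OF assms(1) x assms(2) y] .
  finally show "inf (e s y) (A x) \<le> e x y" .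
qed

lemma is_Lsup_unique: "Lorder X e \<Longrightarrow> is_Lsup X e A s \<Longrightarrow> is_Lsup X e A t \<Longrightarrow> s = t"
  by (erule Lorder_eqI) (auto simp: is_Lsup_iff)

lemma Ldirected_cong: "Ldirected X e D \<Longrightarrow> (\<And>x. x \<in> X \<Longrightarrow> D x = D' x) \<Longrightarrow> Ldirected X e D'"
  unfolding Ldirected_def Lnonempty_def by (auto cong: SUP_cong)

lemma is_Lsup_cong: "is_Lsup X e D s \<Longrightarrow> (\<And>x. x \<in> X \<Longrightarrow> D x = D' x) \<Longrightarrow> is_Lsup X e D' s"
  unfolding is_Lsup_iff by (auto cong: INF_cong)

lemma Ldirected_SUP: "Ldirected X e D \<Longrightarrow> (SUP x\<in>X. D x) = top"
  by (simp add: Ldirected_def Lnonempty_def)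

lemma Ldirected_inf_le:
  "Ldirected X e D \<Longrightarrow> x \<in> X \<Longrightarrow> y \<in> X \<Longrightarrow> inf (D x) (D y) \<le> (SUP z\<in>X. inf (D z) (inf (e x z) (e y z)))"
  by (simp add: Ldirected_def)

lemma inf_SUP_Ldirected:
  assumes D: "Ldirected X e D"
    and F: "\<And>x z. x \<in> X \<Longrightarrow> z \<in> X \<Longrightarrow> inf (F x) (e x z) \<le> F z"
    and G: "\<And>x z. x \<in> X \<Longrightarrow> z \<in> X \<Longrightarrow> inf (G x) (e x z) \<le> G z"
  shows "inf (SUP x\<in>X. inf (F x) (D x)) (SUP y\<in>X. inf (G y) (D y)) \<le> (SUP z\<in>X. inf (inf (F z) (G z)) (D z))"
proof -
  let ?R = "SUP z\<in>X. inf (inf (F z) (G z)) (D z)"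
  have "inf (inf (F x) (D x)) (inf (G y) (D y)) \<le> ?R" if xy: "x \<in> X" "y \<in> X" for x y
  proof -
    have "inf (inf (F x) (D x)) (inf (G y) (D y)) = inf (inf (F x) (G y)) (inf (D x) (D y))"
      by (simp add: inf_aci)
    also have "\<dots> \<le> inf (inf (F x) (G y)) (SUP z\<in>X. inf (D z) (inf (e x z) (e y z)))"
      using Ldirected_inf_le[OF D xy] by (rule inf_mono[OF order_refl])
    also have "\<dots> = (SUP z\<in>X. inf (inf (inf (F x) (e x z)) (inf (G y) (e y z))) (D z))"
      unfolding inf_SUP_frame by (simp add: inf_aci)
    also have "\<dots> \<le> ?R"
      using F[OF xy(1)] G[OF xy(2)] by (intro SUP_mono) (blast intro: inf_mono)
    finally show ?thesis .
  qed
  thus ?thesis unfolding SUP_inf_frame inf_SUP_frame by (auto intro!: SUP_least)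
qed

lemma Lsub_Limg:
  assumes "\<And>x. x \<in> X \<Longrightarrow> f x \<in> Y"
  shows "Lsub Y (Limg X f D) B = (INF x\<in>X. limp (D x) (B (f x)))"
proof -
  have "Lsub Y (Limg X f D) B = (INF y\<in>Y. INF x\<in>{x\<in>X. f x = y}. limp (D x) (B y))"
    unfolding Lsub_def Limg_def limp_SUP_left ..
  also have "\<dots> = (INF x\<in>X. limp (D x) (B (f x)))"
  proof (rule order_antisym)
    show "(INF y\<in>Y. INF x\<in>{x\<in>X. f x = y}. limp (D x) (B y)) \<le> (INF x\<in>X. limp (D x) (B (f x)))"
    proof (rule INF_greatest)
      fix x assume x: "x \<in> X"
      have "(INF y\<in>Y. INF x\<in>{x\<in>X. f x = y}. limp (D x) (B y))
          \<le> (INF x'\<in>{x'\<in>X. f x' = f x}. limp (D x') (B (f x)))"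
        using assms[OF x] by (rule INF_lower)
      also have "\<dots> \<le> limp (D x) (B (f x))" using x by (intro INF_lower) auto
      finally show "(INF y\<in>Y. INF x\<in>{x\<in>X. f x = y}. limp (D x) (B y)) \<le> limp (D x) (B (f x))" .
    qed
    show "(INF x\<in>X. limp (D x) (B (f x))) \<le> (INF y\<in>Y. INF x\<in>{x\<in>X. f x = y}. limp (D x) (B y))"
      by (auto intro!: INF_greatest INF_lower)
  qed
  finally show ?thesis .
qed

lemma is_Lsup_Limg_iff:
  assumes "\<And>x. x \<in> X \<Longrightarrow> f x \<in> Y"
  shows "is_Lsup Y e' (Limg X f D) s \<longleftrightarrow> s \<in> Y \<and> (\<forall>y\<in>Y. e' s y = (INF x\<in>X. limp (D x) (e' (f x) y)))"
proof -
  have "Lsub Y (Limg X f D) B = (INF x\<in>X. limp (D x) (B (f x)))" for B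
    using assms by (rule Lsub_Limg)
  thus ?thesis by (simp add: is_Lsup_def Ldown_def)
qed

lemma le_Limg: "x \<in> X \<Longrightarrow> D x \<le> Limg X f D (f x)"
  unfolding Limg_def by (rule SUP_upper) auto

lemma SUP_inf_Limg:
  assumes "\<And>x. x \<in> X \<Longrightarrow> f x \<in> Y"
  shows "(SUP y\<in>Y. inf (B y) (Limg X f D y)) = (SUP x\<in>X. inf (B (f x)) (D x))"
proof (rule order_antisym)
  show "(SUP y\<in>Y. inf (B y) (Limg X f D y)) \<le> (SUP x\<in>X. inf (B (f x)) (D x))"
    unfolding Limg_def inf_SUP_frame by (auto intro!: SUP_least intro: SUP_upper)
  show "(SUP x\<in>X. inf (B (f x)) (D x)) \<le> (SUP y\<in>Y. inf (B y) (Limg X f D y))"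
  proof (rule SUP_least)
    fix x assume x: "x \<in> X"
    have "inf (B (f x)) (D x) \<le> inf (B (f x)) (Limg X f D (f x))" using le_Limg[OF x] by (rule inf_mono[OF order_refl])
    also have "\<dots> \<le> (SUP y\<in>Y. inf (B y) (Limg X f D y))" using assms[OF x] by (rule SUP_upper)
    finally show "inf (B (f x)) (D x) \<le> (SUP y\<in>Y. inf (B y) (Limg X f D y))" .
  qed
qed

lemma Ldirected_Limg:
  assumes f: "\<And>x. x \<in> X \<Longrightarrow> f x \<in> Y"
    and mono: "\<And>x y. x \<in> X \<Longrightarrow> y \<in> X \<Longrightarrow> e x y \<le> e' (f x) (f y)"
    and D: "Ldirected X e D"
  shows "Ldirected Y e' (Limg X f D)"
  unfolding Ldirected_def Lnonempty_def
proof (intro conjI ballI)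
  have "top = (SUP x\<in>X. D x)" using Ldirected_SUP[OF D] by simp
  also have "\<dots> \<le> (SUP y\<in>Y. Limg X f D y)"
    by (rule SUP_least, rule order_trans[OF le_Limg], assumption, rule SUP_upper, rule f)
  finally show "(SUP y\<in>Y. Limg X f D y) = top" by (simp add: top_unique)
next
  fix m1 m2 assume m: "m1 \<in> Y" "m2 \<in> Y"
  let ?R = "SUP m\<in>Y. inf (Limg X f D m) (inf (e' m1 m) (e' m2 m))"
  have "inf (D x1) (D x2) \<le> ?R" if x: "x1 \<in> X" "x2 \<in> X" "f x1 = m1" "f x2 = m2" for x1 x2
  proof -
    have "inf (D x1) (D x2) \<le> (SUP z\<in>X. inf (D z) (inf (e x1 z) (e x2 z)))"
      by (rule Ldirected_inf_le[OF D x(1,2)])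
    also have "\<dots> \<le> ?R"
    proof (rule SUP_least)
      fix z assume z: "z \<in> X"
      have "inf (D z) (inf (e x1 z) (e x2 z)) \<le> inf (Limg X f D (f z)) (inf (e' m1 (f z)) (e' m2 (f z)))"
        using le_Limg[OF z, of D f] mono[OF x(1) z] mono[OF x(2) z] x(3,4) by (intro inf_mono) auto
      also have "\<dots> \<le> ?R" using f[OF z] by (rule SUP_upper)
      finally show "inf (D z) (inf (e x1 z) (e x2 z)) \<le> ?R" .
    qed
    finally show ?thesis .
  qed
  thus "inf (Limg X f D m1) (Limg X f D m2) \<le> ?R"
    unfolding Limg_def SUP_inf_frame inf_SUP_frame by (auto intro!: SUP_least)
qed

definition Ldown_closure :: "'a set \<Rightarrow> ('a \<Rightarrow> 'a \<Rightarrow> 'l::frame) \<Rightarrow> ('a \<Rightarrow> 'l) \<Rightarrow> 'a \<Rightarrow> 'l" where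
  "Ldown_closure X e D z = (SUP y\<in>X. inf (e z y) (D y))"

lemma le_Ldown_closure:
  assumes "Lorder X e" "y \<in> X"
  shows "D y \<le> Ldown_closure X e D y"
  unfolding Ldown_closure_def by (rule SUP_upper2[OF assms(2)]) (simp add: Lorder_refl[OF assms])

lemma Llower_Ldown_closure:
  assumes ord: "Lorder X e"
  shows "Llower X e (Ldown_closure X e D)"
  unfolding Llower_def
proof (intro ballI)
  fix z z' assume z: "z \<in> X" "z' \<in> X"
  have *: "inf (inf (e z y) (D y)) (e z' z) \<le> inf (e z' y) (D y)" if y: "y \<in> X" for y
  proof -
    have "inf (inf (e z y) (D y)) (e z' z) = inf (inf (e z' z) (e z y)) (D y)" by (simp add: inf_aci)
    also have "\<dots> \<le> inf (e z' y) (D y)" using Lorder_trans[OF ord z(2) z(1) y] by (rule inf_mono) simp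
    finally show ?thesis .
  qed
  show "inf (Ldown_closure X e D z) (e z' z) \<le> Ldown_closure X e D z'"
    unfolding Ldown_closure_def SUP_inf_frame by (rule SUP_subset_mono[OF order_refl], rule *)
qed

lemma Lideal_Ldown_closure:
  assumes ord: "Lorder X e" and D: "Ldirected X e D"
  shows "Lideal X e (Ldown_closure X e D)"
  unfolding Lideal_def Ldirected_def Lnonempty_def
proof (intro conjI ballI Llower_Ldown_closure[OF ord])
  have "top = (SUP y\<in>X. D y)" using Ldirected_SUP[OF D] by simp
  also have "\<dots> \<le> (SUP y\<in>X. Ldown_closure X e D y)" by (intro SUP_subset_mono order_refl le_Ldown_closure[OF ord])
  finally show "(SUP y\<in>X. Ldown_closure X e D y) = top" by (simp add: top_unique)
next
  fix z1 z2 assume z: "z1 \<in> X" "z2 \<in> X"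
  have "inf (Ldown_closure X e D z1) (Ldown_closure X e D z2) \<le> (SUP y\<in>X. inf (inf (e z1 y) (e z2 y)) (D y))"
    unfolding Ldown_closure_def
    by (rule inf_SUP_Ldirected[OF D]) (simp_all add: Lorder_trans[OF ord] z)
  also have "\<dots> \<le> (SUP y\<in>X. inf (Ldown_closure X e D y) (inf (e z1 y) (e z2 y)))"
    by (intro SUP_subset_mono order_refl, subst inf_commute)
      (intro inf_mono le_Ldown_closure[OF ord] order_refl)
  finally show "inf (Ldown_closure X e D z1) (Ldown_closure X e D z2)
      \<le> (SUP y\<in>X. inf (Ldown_closure X e D y) (inf (e z1 y) (e z2 y)))" .
qed

lemma is_Lsup_Ldown_closure:
  assumes ord: "Lorder X e" and s: "is_Lsup X e D s"
  shows "is_Lsup X e (Ldown_closure X e D) s"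
proof (rule is_LsupI[OF ord is_Lsup_in[OF s]])
  fix z assume z: "z \<in> X"
  have "inf (e z y) (D y) \<le> e z s" if y: "y \<in> X" for y
    using is_Lsup_upper[OF ord s y] Lorder_trans[OF ord z y is_Lsup_in[OF s]]
    by (meson inf_mono order_refl order_trans)
  thus "Ldown_closure X e D z \<le> e z s" unfolding Ldown_closure_def by (rule SUP_least)
next
  fix y assume y: "y \<in> X"
  have "(INF x\<in>X. limp (Ldown_closure X e D x) (e x y)) \<le> (INF x\<in>X. limp (D x) (e x y))"
    using le_Ldown_closure[OF ord] by (intro INF_superset_mono) (simp_all add: limp_mono)
  also have "\<dots> = e s y" using s y by (simp add: is_Lsup_iff)
  finally show "(INF x\<in>X. limp (Ldown_closure X e D x) (e x y)) \<le> e s y" .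
qed

lemma Lideal_Ldown:
  assumes ord: "Lorder X e" and x: "x \<in> X"
  shows "Lideal X e (Ldown e x)"
  unfolding Lideal_def Ldirected_def Lnonempty_def Llower_def Ldown_def
proof (intro conjI ballI)
  show "(SUP y\<in>X. e y x) = top" using x by (metis Lorder_refl[OF ord x] SUP_upper top_unique)
  show "inf (e y1 x) (e y2 x) \<le> (SUP z\<in>X. inf (e z x) (inf (e y1 z) (e y2 z)))" for y1 y2
    by (rule SUP_upper2[OF x]) (simp add: Lorder_refl[OF ord x])
  show "inf (e y x) (e z y) \<le> e z x" if "y \<in> X" "z \<in> X" for y z
    using Lorder_trans[OF ord that(2,1) x] by (simp add: inf_commute)
qed

lemma is_Lsup_Ldown:
  assumes ord: "Lorder X e" and x: "x \<in> X"
  shows "is_Lsup X e (Ldown e x) x"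
proof (rule is_LsupI[OF ord x])
  show "Ldown e x y \<le> e y x" for y by (simp add: Ldown_def)
  show "(INF z\<in>X. limp (Ldown e x z) (e z y)) \<le> e x y" for y
    using INF_lower[OF x, of "\<lambda>z. limp (Ldown e x z) (e z y)"] by (simp add: Ldown_def Lorder_refl[OF ord x])
qed

lemma scott_cont_in: "scott_cont X e M eM f \<Longrightarrow> x \<in> X \<Longrightarrow> f x \<in> M"
  by (simp add: scott_cont_def)

lemma Ldcpo_Lorder: "Ldcpo M eM \<Longrightarrow> Lorder M eM"
  by (simp add: Ldcpo_def)

lemma scott_cont_mono:
  assumes ord: "Lorder X e" and ordM: "Lorder M eM" and f: "scott_cont X e M eM f"
    and xy: "x \<in> X" "y \<in> X"
  shows "e x y \<le> eM (f x) (f y)"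
proof -
  have "is_Lsup M eM (Limg X f (Ldown e y)) (f y)"
    using f Lideal_Ldown[OF ord xy(2)] is_Lsup_Ldown[OF ord xy(2)] by (simp add: scott_cont_def Lideal_def)
  hence "top = (INF z\<in>X. limp (e z y) (eM (f z) (f y)))"
    using Lorder_refl[OF ordM scott_cont_in[OF f xy(2)]] by (simp add: is_Lsup_Limg_iff scott_cont_in[OF f] Ldown_def)
  also have "\<dots> \<le> limp (e x y) (eM (f x) (f y))" using xy(1) by (rule INF_lower)
  finally show ?thesis by (rule top_le_limpD)
qed

lemma Lwaybelow_le_limp:
  "Lideal X e I \<Longrightarrow> is_Lsup X e I s \<Longrightarrow> Lwaybelow X e x y \<le> limp (e x s) (I y)"
  unfolding Lwaybelow_def by (rule Inf_lower) blast

lemma Lwaybelow_le: "Lorder X e \<Longrightarrow> x \<in> X \<Longrightarrow> Lwaybelow X e x y \<le> e y x"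
  using Lwaybelow_le_limp[OF Lideal_Ldown is_Lsup_Ldown, of X e x x y]
  by (simp add: Lorder_refl Ldown_def)

lemma Lwaybelow_upper:
  assumes ord: "Lorder X e" and ab: "a \<in> X" "b \<in> X"
  shows "inf (Lwaybelow X e a y) (e a b) \<le> Lwaybelow X e b y"
  unfolding Lwaybelow_def[of X e b y]
proof (rule Inf_greatest, clarify, rule limpI)
  fix I s assume I: "Lideal X e I" and s: "is_Lsup X e I s"
  have "inf (inf (Lwaybelow X e a y) (e a b)) (e b s) \<le> inf (limp (e a s) (I y)) (e a s)"
    unfolding inf_assoc
    using Lwaybelow_le_limp[OF I s] Lorder_trans[OF ord ab is_Lsup_in[OF s]] by (rule inf_mono)
  also have "\<dots> \<le> I y" by (rule inf_limp_le)
  finally show "inf (inf (Lwaybelow X e a y) (e a b)) (e b s) \<le> I y" .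
qed

lemma Lwaybelow_lower:
  assumes y: "y \<in> X" "y' \<in> X"
  shows "inf (Lwaybelow X e x y) (e y' y) \<le> Lwaybelow X e x y'"
  unfolding Lwaybelow_def[of X e x y']
proof (rule Inf_greatest, clarify, rule limpI)
  fix I s assume I: "Lideal X e I" and s: "is_Lsup X e I s"
  have "inf (inf (Lwaybelow X e x y) (e y' y)) (e x s) = inf (inf (Lwaybelow X e x y) (e x s)) (e y' y)"
    by (simp add: inf_aci)
  also have "\<dots> \<le> inf (I y) (e y' y)"
    using Lwaybelow_le_limp[OF I s] by (intro inf_mono order_refl) (simp add: le_limp_iff)
  also have "\<dots> \<le> I y'" using I y by (simp add: Lideal_def Llower_def)
  finally show "inf (inf (Lwaybelow X e x y) (e y' y)) (e x s) \<le> I y'" .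
qed

lemma Lwaybelow_le_Ldown_closure:
  assumes ord: "Lorder X e" and D: "Ldirected X e D" and s: "is_Lsup X e D s"
  shows "Lwaybelow X e s z \<le> Ldown_closure X e D z"
  using Lwaybelow_le_limp[OF Lideal_Ldown_closure[OF ord D] is_Lsup_Ldown_closure[OF ord s], of s z]
  by (simp add: Lorder_refl[OF ord is_Lsup_in[OF s]])

section \<open>The Scott \<open>L\<close>-topology and its points\<close>

lemma sigmaL_outside: "A \<in> sigmaL X e \<Longrightarrow> x \<notin> X \<Longrightarrow> A x = bot"
  by (simp add: sigmaL_def)

lemma sigmaL_upper: "A \<in> sigmaL X e \<Longrightarrow> x \<in> X \<Longrightarrow> y \<in> X \<Longrightarrow> inf (A x) (e x y) \<le> A y"
  by (simp add: sigmaL_def Lupper_def)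

lemma sigmaL_Lsup:
  "A \<in> sigmaL X e \<Longrightarrow> Ldirected X e D \<Longrightarrow> is_Lsup X e D s \<Longrightarrow> A s = (SUP x\<in>X. inf (A x) (D x))"
  by (simp add: sigmaL_def)

lemma sigmaLI:
  assumes "\<And>x. x \<notin> X \<Longrightarrow> A x = bot"
    and "\<And>x y. x \<in> X \<Longrightarrow> y \<in> X \<Longrightarrow> inf (A x) (e x y) \<le> A y"
    and "\<And>D s. Ldirected X e D \<Longrightarrow> is_Lsup X e D s \<Longrightarrow> A s = (SUP x\<in>X. inf (A x) (D x))"
  shows "A \<in> sigmaL X e"
  using assms by (auto simp: sigmaL_def Lupper_def)

lemma const_on_sigmaL: "const_on X c \<in> sigmaL X e"
proof (rule sigmaLI)
  fix D s assume D: "Ldirected X e D" and s: "is_Lsup X e D s"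
  have "(SUP x\<in>X. inf (const_on X c x) (D x)) = inf c (SUP x\<in>X. D x)"
    unfolding inf_SUP_frame by (rule SUP_cong) (auto simp: const_on_def)
  thus "const_on X c s = (SUP x\<in>X. inf (const_on X c x) (D x))"
    using is_Lsup_in[OF s] Ldirected_SUP[OF D] by (simp add: const_on_def)
qed (auto simp: const_on_def)

lemma Sup_sigmaL:
  assumes S: "S \<subseteq> sigmaL X e"
  shows "Sup S \<in> sigmaL X e"
proof (rule sigmaLI)
  fix x assume "x \<notin> X"
  thus "Sup S x = bot" using S sigmaL_outside[of _ X e x] by (auto simp: Sup_apply)
next
  fix x y assume "x \<in> X" "y \<in> X"
  thus "inf (Sup S x) (e x y) \<le> Sup S y"
    unfolding Sup_apply SUP_inf_frame using S sigmaL_upper[of _ X e x y]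
    by (intro SUP_subset_mono order_refl) blast+
next
  fix D s assume D: "Ldirected X e D" and s: "is_Lsup X e D s"
  have "Sup S s = (SUP A\<in>S. SUP x\<in>X. inf (A x) (D x))"
    unfolding Sup_apply using S sigmaL_Lsup[OF _ D s] by (auto intro!: SUP_cong)
  also have "\<dots> = (SUP x\<in>X. SUP A\<in>S. inf (A x) (D x))" by (rule SUP_commute)
  also have "\<dots> = (SUP x\<in>X. inf (Sup S x) (D x))" unfolding Sup_apply SUP_inf_frame ..
  finally show "Sup S s = (SUP x\<in>X. inf (Sup S x) (D x))" .
qed

lemma inf_sigmaL:
  assumes A: "A \<in> sigmaL X e" and B: "B \<in> sigmaL X e"
  shows "inf A B \<in> sigmaL X e"
proof (rule sigmaLI)
  fix x assume "x \<notin> X" thus "inf A B x = bot" using sigmaL_outside[OF A] by simp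
next
  fix x y assume xy: "x \<in> X" "y \<in> X"
  have "inf (inf (A x) (B x)) (e x y) = inf (inf (A x) (e x y)) (inf (B x) (e x y))" by (simp add: inf_aci)
  also have "\<dots> \<le> inf (A y) (B y)" using sigmaL_upper[OF A xy] sigmaL_upper[OF B xy] by (rule inf_mono)
  finally show "inf (inf A B x) (e x y) \<le> inf A B y" by simp
next
  fix D s assume D: "Ldirected X e D" and s: "is_Lsup X e D s"
  have "inf A B s = inf (SUP x\<in>X. inf (A x) (D x)) (SUP y\<in>X. inf (B y) (D y))"
    using sigmaL_Lsup[OF A D s] sigmaL_Lsup[OF B D s] by simp
  also have "\<dots> = (SUP z\<in>X. inf (inf (A z) (B z)) (D z))"
  proof (rule order_antisym)
    show "inf (SUP x\<in>X. inf (A x) (D x)) (SUP y\<in>X. inf (B y) (D y)) \<le> (SUP z\<in>X. inf (inf (A z) (B z)) (D z))"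
      using D sigmaL_upper[OF A] sigmaL_upper[OF B] by (rule inf_SUP_Ldirected)
    show "(SUP z\<in>X. inf (inf (A z) (B z)) (D z)) \<le> inf (SUP x\<in>X. inf (A x) (D x)) (SUP y\<in>X. inf (B y) (D y))"
      by (intro le_infI SUP_mono' inf_mono inf_le1 inf_le2 order_refl)
  qed
  finally show "inf A B s = (SUP x\<in>X. inf (inf A B x) (D x))" by simp
qed

lemma ptL_outside: "p \<in> ptL X e \<Longrightarrow> A \<notin> sigmaL X e \<Longrightarrow> p A = bot"
  by (simp add: ptL_def)

lemma ptL_inf: "p \<in> ptL X e \<Longrightarrow> A \<in> sigmaL X e \<Longrightarrow> B \<in> sigmaL X e \<Longrightarrow> p (inf A B) = inf (p A) (p B)"
  by (simp add: ptL_def)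

lemma ptL_Sup: "p \<in> ptL X e \<Longrightarrow> S \<subseteq> sigmaL X e \<Longrightarrow> p (Sup S) = Sup (p ` S)"
  by (simp add: ptL_def)

lemma ptL_const_on: "p \<in> ptL X e \<Longrightarrow> p (const_on X c) = c"
  by (simp add: ptL_def)

lemma ptLI:
  assumes "\<And>A. A \<notin> sigmaL X e \<Longrightarrow> p A = bot"
    and "\<And>A B. A \<in> sigmaL X e \<Longrightarrow> B \<in> sigmaL X e \<Longrightarrow> p (inf A B) = inf (p A) (p B)"
    and "\<And>S. S \<subseteq> sigmaL X e \<Longrightarrow> p (Sup S) = Sup (p ` S)"
    and "\<And>c. p (const_on X c) = c"
  shows "p \<in> ptL X e"
  using assms by (simp add: ptL_def)

lemma ptL_SUP:
  "p \<in> ptL X e \<Longrightarrow> (\<And>i. i \<in> I \<Longrightarrow> F i \<in> sigmaL X e) \<Longrightarrow> p (SUP i\<in>I. F i) = (SUP i\<in>I. p (F i))"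
  using ptL_Sup[of p X e "F ` I"] by (auto simp: image_comp)

lemma ptL_mono: "p \<in> ptL X e \<Longrightarrow> A \<in> sigmaL X e \<Longrightarrow> B \<in> sigmaL X e \<Longrightarrow> A \<le> B \<Longrightarrow> p A \<le> p B"
  using ptL_inf[of p X e A B] by (simp add: inf.absorb1 le_iff_inf)

lemma ptL_inf_const_on: "p \<in> ptL X e \<Longrightarrow> A \<in> sigmaL X e \<Longrightarrow> p (inf A (const_on X c)) = inf (p A) c"
  by (simp add: ptL_inf const_on_sigmaL ptL_const_on)

lemma inf_subPt_le:
  assumes "A \<in> sigmaL X e"
  shows "inf (p A) (subPt X e p q) \<le> q A"
proof -
  have "subPt X e p q \<le> limp (p A) (q A)" unfolding subPt_def using assms by (rule INF_lower)
  thus ?thesis by (simp add: le_limp_iff inf_commute)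
qed

lemma subPt_greatest: "(\<And>A. A \<in> sigmaL X e \<Longrightarrow> inf c (p A) \<le> q A) \<Longrightarrow> c \<le> subPt X e p q"
  unfolding subPt_def by (auto intro!: INF_greatest limpI)

lemma subPt_refl [simp]: "subPt X e p p = top"
  by (simp add: subPt_def limpI top_unique)

lemma subPt_trans: "inf (subPt X e p q) (subPt X e q r) \<le> subPt X e p r"
proof (rule subPt_greatest)
  fix A assume A: "A \<in> sigmaL X e"
  have "inf (inf (subPt X e p q) (subPt X e q r)) (p A) = inf (inf (p A) (subPt X e p q)) (subPt X e q r)"
    by (simp add: inf_aci)
  also have "\<dots> \<le> inf (q A) (subPt X e q r)" using inf_subPt_le[OF A] by (rule inf_mono) simp
  also have "\<dots> \<le> r A" using inf_subPt_le[OF A] .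
  finally show "inf (inf (subPt X e p q) (subPt X e q r)) (p A) \<le> r A" .
qed

lemma Lorder_ptL: "Lorder (ptL X e) (subPt X e)"
  unfolding Lorder_def
proof (intro conjI ballI impI)
  fix p q assume p: "p \<in> ptL X e" and q: "q \<in> ptL X e"
    and top: "inf (subPt X e p q) (subPt X e q p) = top"
  show "p = q"
  proof
    fix A show "p A = q A"
    proof (cases "A \<in> sigmaL X e")
      case True
      thus ?thesis using inf_subPt_le[OF True, of p q] inf_subPt_le[OF True, of q p] top
        by (simp add: inf_eq_top_iff order_antisym)
    qed (simp add: ptL_outside[OF p] ptL_outside[OF q])
  qed
qed (simp_all add: subPt_trans)

lemma etaP_apply: "A \<in> sigmaL X e \<Longrightarrow> etaP X e x A = A x"
  by (simp add: etaP_def)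

lemma etaP_ptL:
  assumes x: "x \<in> X"
  shows "etaP X e x \<in> ptL X e"
proof (rule ptLI)
  fix S assume S: "S \<subseteq> sigmaL X e"
  hence "etaP X e x ` S = (\<lambda>A. A x) ` S" by (auto simp: etaP_def)
  thus "etaP X e x (Sup S) = Sup (etaP X e x ` S)" using Sup_sigmaL[OF S] by (simp add: etaP_def Sup_apply)
next
  show "etaP X e x (const_on X c) = c" for c
    using etaP_apply[OF const_on_sigmaL[of X c e], of x] x by (simp add: const_on_def)
qed (auto simp: etaP_def inf_sigmaL)

lemma etaP_mono: "x \<in> X \<Longrightarrow> y \<in> X \<Longrightarrow> e x y \<le> subPt X e (etaP X e x) (etaP X e y)"
  by (rule subPt_greatest) (simp add: etaP_apply inf_commute sigmaL_upper)

lemma subPt_etaP_left: "subPt X e (etaP X e x) r = (INF A\<in>sigmaL X e. limp (A x) (r A))"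
  unfolding subPt_def by (rule INF_cong) (simp_all add: etaP_apply)

lemma scott_cont_etaP: "scott_cont X e (ptL X e) (subPt X e) (etaP X e)"
  unfolding scott_cont_def
proof (intro conjI allI impI ballI etaP_ptL)
  fix D s assume "Ldirected X e D \<and> is_Lsup X e D s"
  hence D: "Ldirected X e D" and s: "is_Lsup X e D s" by auto
  have "subPt X e (etaP X e s) r = (INF x\<in>X. limp (D x) (subPt X e (etaP X e x) r))" for r
  proof -
    have "subPt X e (etaP X e s) r = (INF A\<in>sigmaL X e. limp (SUP x\<in>X. inf (A x) (D x)) (r A))"
      unfolding subPt_etaP_left by (rule INF_cong) (simp_all add: sigmaL_Lsup[OF _ D s])
    also have "\<dots> = (INF A\<in>sigmaL X e. INF x\<in>X. limp (D x) (limp (A x) (r A)))"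
      by (simp add: limp_SUP_left limp_inf_left[symmetric] inf_commute)
    also have "\<dots> = (INF x\<in>X. INF A\<in>sigmaL X e. limp (D x) (limp (A x) (r A)))" by (rule INF_commute)
    also have "\<dots> = (INF x\<in>X. limp (D x) (subPt X e (etaP X e x) r))"
      by (simp add: subPt_etaP_left limp_INF_right)
    finally show ?thesis .
  qed
  thus "is_Lsup (ptL X e) (subPt X e) (Limg X (etaP X e) D) (etaP X e s)"
    using is_Lsup_in[OF s] by (simp add: is_Lsup_Limg_iff etaP_ptL)
qed

definition pt_Sup :: "'a set \<Rightarrow> ('a \<Rightarrow> 'a \<Rightarrow> 'l::frame) \<Rightarrow> ((('a \<Rightarrow> 'l) \<Rightarrow> 'l) \<Rightarrow> 'l) \<Rightarrow> ('a \<Rightarrow> 'l) \<Rightarrow> 'l"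
  where "pt_Sup X e D = (\<lambda>A. if A \<in> sigmaL X e then SUP q\<in>ptL X e. inf (q A) (D q) else bot)"

lemma pt_Sup_inf:
  assumes D: "Ldirected (ptL X e) (subPt X e) D" and A: "A \<in> sigmaL X e" and B: "B \<in> sigmaL X e"
  shows "pt_Sup X e D (inf A B) = inf (pt_Sup X e D A) (pt_Sup X e D B)"
proof -
  have "pt_Sup X e D (inf A B) = (SUP q\<in>ptL X e. inf (inf (q A) (q B)) (D q))"
    using A B by (auto simp: pt_Sup_def ptL_inf inf_sigmaL intro!: SUP_cong)
  also have "\<dots> = inf (SUP q\<in>ptL X e. inf (q A) (D q)) (SUP q\<in>ptL X e. inf (q B) (D q))"
  proof (rule order_antisym)
    show "(SUP q\<in>ptL X e. inf (inf (q A) (q B)) (D q))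
        \<le> inf (SUP q\<in>ptL X e. inf (q A) (D q)) (SUP q\<in>ptL X e. inf (q B) (D q))"
      by (intro le_infI SUP_mono' inf_mono inf_le1 inf_le2 order_refl)
    show "inf (SUP q\<in>ptL X e. inf (q A) (D q)) (SUP q\<in>ptL X e. inf (q B) (D q))
        \<le> (SUP q\<in>ptL X e. inf (inf (q A) (q B)) (D q))"
      by (rule inf_SUP_Ldirected[OF D]) (rule inf_subPt_le[OF A], rule inf_subPt_le[OF B])
  qed
  also have "\<dots> = inf (pt_Sup X e D A) (pt_Sup X e D B)" using A B by (simp add: pt_Sup_def)
  finally show ?thesis .
qed

lemma pt_Sup_ptL:
  assumes D: "Ldirected (ptL X e) (subPt X e) D"
  shows "pt_Sup X e D \<in> ptL X e"
proof (rule ptLI)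
  fix S assume S: "S \<subseteq> sigmaL X e"
  have "pt_Sup X e D (Sup S) = (SUP q\<in>ptL X e. inf (SUP A\<in>S. q A) (D q))"
    using Sup_sigmaL[OF S] S by (auto simp: pt_Sup_def ptL_Sup intro!: SUP_cong)
  also have "\<dots> = (SUP A\<in>S. SUP q\<in>ptL X e. inf (q A) (D q))"
    by (simp add: SUP_inf_frame SUP_commute[where A = "ptL X e"])
  also have "\<dots> = Sup (pt_Sup X e D ` S)"
  proof -
    have "pt_Sup X e D ` S = (\<lambda>A. SUP q\<in>ptL X e. inf (q A) (D q)) ` S"
      using S by (auto simp: pt_Sup_def intro!: image_cong)
    thus ?thesis by simp
  qed
  finally show "pt_Sup X e D (Sup S) = Sup (pt_Sup X e D ` S)" .
next
  fix c
  have "pt_Sup X e D (const_on X c) = inf c (SUP q\<in>ptL X e. D q)"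
    by (auto simp: pt_Sup_def const_on_sigmaL ptL_const_on inf_SUP_frame intro!: SUP_cong)
  thus "pt_Sup X e D (const_on X c) = c" using Ldirected_SUP[OF D] by simp
qed (simp_all add: pt_Sup_inf[OF D], simp add: pt_Sup_def)

lemma is_Lsup_pt_Sup:
  assumes D: "Ldirected (ptL X e) (subPt X e) D"
  shows "is_Lsup (ptL X e) (subPt X e) D (pt_Sup X e D)"
  unfolding is_Lsup_iff
proof (intro conjI ballI pt_Sup_ptL[OF D])
  fix r
  have "subPt X e (pt_Sup X e D) r = (INF A\<in>sigmaL X e. limp (SUP q\<in>ptL X e. inf (q A) (D q)) (r A))"
    unfolding subPt_def by (rule INF_cong) (simp_all add: pt_Sup_def)
  also have "\<dots> = (INF A\<in>sigmaL X e. INF q\<in>ptL X e. limp (D q) (limp (q A) (r A)))"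
    by (simp add: limp_SUP_left limp_inf_left[symmetric] inf_commute)
  also have "\<dots> = (INF q\<in>ptL X e. INF A\<in>sigmaL X e. limp (D q) (limp (q A) (r A)))" by (rule INF_commute)
  also have "\<dots> = (INF q\<in>ptL X e. limp (D q) (subPt X e q r))" by (simp add: subPt_def limp_INF_right)
  finally show "subPt X e (pt_Sup X e D) r = (INF q\<in>ptL X e. limp (D q) (subPt X e q r))" .
qed

lemma Ldcpo_ptL: "Ldcpo (ptL X e) (subPt X e)"
  unfolding Ldcpo_def using Lorder_ptL is_Lsup_pt_Sup by blast

lemma is_Lsup_ptL_imp_eq_pt_Sup:
  "Ldirected (ptL X e) (subPt X e) D \<Longrightarrow> is_Lsup (ptL X e) (subPt X e) D s \<Longrightarrow> s = pt_Sup X e D"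
  using is_Lsup_unique[OF Lorder_ptL] is_Lsup_pt_Sup by blast

section \<open>Continuous \<open>L\<close>-ordered sets\<close>

locale continuous_Lordered_set =
  fixes P :: "'a set" and e :: "'a \<Rightarrow> 'a \<Rightarrow> 'l::frame"
  assumes cont_Lordered: "cont_Lordered P e"
begin

lemma Lorder: "Lorder P e"
  using cont_Lordered by (simp add: cont_Lordered_def)

lemma Ldirected_Lwaybelow: "x \<in> P \<Longrightarrow> Ldirected P e (Lwaybelow P e x)"
  using cont_Lordered by (simp add: cont_Lordered_def)

lemma is_Lsup_Lwaybelow: "x \<in> P \<Longrightarrow> is_Lsup P e (Lwaybelow P e x) x"
  using cont_Lordered by (simp add: cont_Lordered_def)

definition Lwaybelow2 :: "'a \<Rightarrow> 'a \<Rightarrow> 'l" where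
  "Lwaybelow2 x y = (SUP z\<in>P. inf (Lwaybelow P e z y) (Lwaybelow P e x z))"

lemma SUP_Lwaybelow2:
  assumes x: "x \<in> P"
  shows "(SUP y\<in>P. Lwaybelow2 x y) = top"
proof -
  have "(SUP y\<in>P. Lwaybelow2 x y) = (SUP z\<in>P. inf (SUP y\<in>P. Lwaybelow P e z y) (Lwaybelow P e x z))"
    unfolding Lwaybelow2_def SUP_inf_frame by (rule SUP_commute)
  also have "\<dots> = (SUP z\<in>P. Lwaybelow P e x z)"
    using Ldirected_SUP[OF Ldirected_Lwaybelow] by (simp cong: SUP_cong)
  finally show ?thesis using Ldirected_SUP[OF Ldirected_Lwaybelow[OF x]] by simp
qed

lemma Lwaybelow2_inf_le:
  assumes x: "x \<in> P" and y: "y1 \<in> P" "y2 \<in> P"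
  shows "inf (Lwaybelow2 x y1) (Lwaybelow2 x y2) \<le> (SUP u\<in>P. inf (Lwaybelow2 x u) (inf (e y1 u) (e y2 u)))"
proof -
  have "inf (Lwaybelow2 x y1) (Lwaybelow2 x y2)
      \<le> (SUP z\<in>P. inf (inf (Lwaybelow P e z y1) (Lwaybelow P e z y2)) (Lwaybelow P e x z))"
    unfolding Lwaybelow2_def
    by (rule inf_SUP_Ldirected[OF Ldirected_Lwaybelow[OF x]]) (simp_all add: Lwaybelow_upper[OF Lorder])
  also have "\<dots> \<le> (SUP u\<in>P. inf (Lwaybelow2 x u) (inf (e y1 u) (e y2 u)))"
  proof (rule SUP_least)
    fix z assume z: "z \<in> P"
    have "inf (inf (Lwaybelow P e z y1) (Lwaybelow P e z y2)) (Lwaybelow P e x z)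
        \<le> (SUP u\<in>P. inf (inf (Lwaybelow P e z u) (inf (e y1 u) (e y2 u))) (Lwaybelow P e x z))"
      unfolding SUP_inf_frame[symmetric] using Ldirected_inf_le[OF Ldirected_Lwaybelow[OF z] y]
      by (rule inf_mono[OF _ order_refl])
    also have "\<dots> \<le> (SUP u\<in>P. inf (Lwaybelow2 x u) (inf (e y1 u) (e y2 u)))"
    proof (rule SUP_subset_mono[OF order_refl])
      fix u
      have "inf (Lwaybelow P e z u) (Lwaybelow P e x z) \<le> Lwaybelow2 x u"
        unfolding Lwaybelow2_def using z by (rule SUP_upper)
      thus "inf (inf (Lwaybelow P e z u) (inf (e y1 u) (e y2 u))) (Lwaybelow P e x z)
          \<le> inf (Lwaybelow2 x u) (inf (e y1 u) (e y2 u))"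
        by (simp add: inf_aci le_infI1 le_infI2 inf_mono)
    qed
    finally show "inf (inf (Lwaybelow P e z y1) (Lwaybelow P e z y2)) (Lwaybelow P e x z)
        \<le> (SUP u\<in>P. inf (Lwaybelow2 x u) (inf (e y1 u) (e y2 u)))" .
  qed
  finally show ?thesis .
qed

lemma Llower_Lwaybelow2: "Llower P e (Lwaybelow2 x)"
  unfolding Llower_def Lwaybelow2_def SUP_inf_frame
proof (intro ballI SUP_subset_mono[OF order_refl])
  fix y y' z assume y: "y \<in> P" "y' \<in> P"
  have "inf (inf (Lwaybelow P e z y) (Lwaybelow P e x z)) (e y' y)
      = inf (inf (Lwaybelow P e z y) (e y' y)) (Lwaybelow P e x z)" by (simp add: inf_aci)
  also have "\<dots> \<le> inf (Lwaybelow P e z y') (Lwaybelow P e x z)"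
    using Lwaybelow_lower[OF y] by (rule inf_mono) simp
  finally show "inf (inf (Lwaybelow P e z y) (Lwaybelow P e x z)) (e y' y)
      \<le> inf (Lwaybelow P e z y') (Lwaybelow P e x z)" .
qed

lemma Lideal_Lwaybelow2: "x \<in> P \<Longrightarrow> Lideal P e (Lwaybelow2 x)"
  by (simp add: Lideal_def Ldirected_def Lnonempty_def SUP_Lwaybelow2 Lwaybelow2_inf_le Llower_Lwaybelow2)

lemma is_Lsup_Lwaybelow2:
  assumes x: "x \<in> P"
  shows "is_Lsup P e (Lwaybelow2 x) x"
  unfolding is_Lsup_iff
proof (intro conjI ballI x)
  fix b assume b: "b \<in> P"
  have "e x b = (INF z\<in>P. limp (Lwaybelow P e x z) (e z b))"
    using is_Lsup_Lwaybelow[OF x] b by (simp add: is_Lsup_iff)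
  also have "\<dots> = (INF z\<in>P. limp (Lwaybelow P e x z) (INF y\<in>P. limp (Lwaybelow P e z y) (e y b)))"
    using is_Lsup_Lwaybelow b by (intro INF_cong) (simp_all add: is_Lsup_iff)
  also have "\<dots> = (INF z\<in>P. INF y\<in>P. limp (inf (Lwaybelow P e x z) (Lwaybelow P e z y)) (e y b))"
    by (simp add: limp_INF_right limp_inf_left)
  also have "\<dots> = (INF y\<in>P. INF z\<in>P. limp (inf (Lwaybelow P e z y) (Lwaybelow P e x z)) (e y b))"
    by (subst INF_commute) (simp add: inf_commute)
  also have "\<dots> = (INF y\<in>P. limp (Lwaybelow2 x y) (e y b))"
    unfolding Lwaybelow2_def limp_SUP_left ..
  finally show "e x b = (INF y\<in>P. limp (Lwaybelow2 x y) (e y b))" .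
qed

lemma Lwaybelow_interpolation: "x \<in> P \<Longrightarrow> Lwaybelow P e x y \<le> Lwaybelow2 x y"
  using Lwaybelow_le_limp[OF Lideal_Lwaybelow2 is_Lsup_Lwaybelow2, of x x y]
  by (simp add: Lorder_refl[OF Lorder])

text \<open>\<open>Lwaybelow P e a x\<close> is the degree to which \<open>x\<close> is way below \<open>a\<close>, so this is \<open>\<Up>x\<close>.\<close>
definition wayabove :: "'a \<Rightarrow> 'a \<Rightarrow> 'l" where
  "wayabove x = (\<lambda>a. if a \<in> P then Lwaybelow P e a x else bot)"

lemma Lwaybelow_Lsup:
  assumes D: "Ldirected P e D" and s: "is_Lsup P e D s"
  shows "Lwaybelow P e s x = (SUP a\<in>P. inf (Lwaybelow P e a x) (D a))"
proof (rule order_antisym)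
  have sP: "s \<in> P" using s by (rule is_Lsup_in)
  have "Lwaybelow P e s x \<le> (SUP z\<in>P. inf (Lwaybelow P e z x) (Lwaybelow P e s z))"
    using Lwaybelow_interpolation[OF sP] by (simp add: Lwaybelow2_def)
  also have "\<dots> \<le> (SUP z\<in>P. SUP a\<in>P. inf (Lwaybelow P e z x) (inf (e z a) (D a)))"
    unfolding inf_SUP_frame[symmetric] Ldown_closure_def[symmetric]
    using Lwaybelow_le_Ldown_closure[OF Lorder D s] by (intro SUP_mono' inf_mono order_refl)
  also have "\<dots> \<le> (SUP a\<in>P. inf (Lwaybelow P e a x) (D a))"
  proof (intro SUP_least)
    fix z a assume z: "z \<in> P" and a: "a \<in> P"
    have "inf (Lwaybelow P e z x) (inf (e z a) (D a)) \<le> inf (Lwaybelow P e a x) (D a)"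
      unfolding inf_assoc[symmetric] by (rule inf_mono[OF Lwaybelow_upper[OF Lorder z a] order_refl])
    thus "inf (Lwaybelow P e z x) (inf (e z a) (D a)) \<le> (SUP a\<in>P. inf (Lwaybelow P e a x) (D a))"
      by (rule SUP_upper2[OF a])
  qed
  finally show "Lwaybelow P e s x \<le> (SUP a\<in>P. inf (Lwaybelow P e a x) (D a))" .
next
  show "(SUP a\<in>P. inf (Lwaybelow P e a x) (D a)) \<le> Lwaybelow P e s x"
  proof (rule SUP_least)
    fix a assume a: "a \<in> P"
    have "inf (Lwaybelow P e a x) (D a) \<le> inf (Lwaybelow P e a x) (e a s)"
      using is_Lsup_upper[OF Lorder s a] by (rule inf_mono[OF order_refl])
    also have "\<dots> \<le> Lwaybelow P e s x" using Lwaybelow_upper[OF Lorder a is_Lsup_in[OF s]] .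
    finally show "inf (Lwaybelow P e a x) (D a) \<le> Lwaybelow P e s x" .
  qed
qed

lemma wayabove_sigmaL: "wayabove x \<in> sigmaL P e"
proof (rule sigmaLI)
  fix D s assume D: "Ldirected P e D" and s: "is_Lsup P e D s"
  have "s \<in> P" using s by (rule is_Lsup_in)
  thus "wayabove x s = (SUP a\<in>P. inf (wayabove x a) (D a))"
    using Lwaybelow_Lsup[OF D s] by (simp add: wayabove_def cong: SUP_cong)
qed (simp_all add: wayabove_def Lwaybelow_upper[OF Lorder])

lemma inf_wayabove_const_on_sigmaL: "inf (wayabove x) (const_on P c) \<in> sigmaL P e"
  by (intro inf_sigmaL wayabove_sigmaL const_on_sigmaL)

lemma sigmaL_eq_SUP_wayabove:
  assumes A: "A \<in> sigmaL P e"
  shows "A = (SUP x\<in>P. inf (wayabove x) (const_on P (A x)))"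
proof
  fix a show "A a = (SUP x\<in>P. inf (wayabove x) (const_on P (A x))) a"
  proof (cases "a \<in> P")
    case True
    have "A a = (SUP x\<in>P. inf (A x) (Lwaybelow P e a x))"
      using A Ldirected_Lwaybelow[OF True] is_Lsup_Lwaybelow[OF True] by (rule sigmaL_Lsup)
    thus ?thesis using True unfolding SUP_apply by (simp add: wayabove_def const_on_def inf_commute cong: SUP_cong)
  qed (simp add: sigmaL_outside[OF A] wayabove_def)
qed

lemma inf_wayabove_le:
  assumes A: "A \<in> sigmaL P e" and x: "x \<in> P"
  shows "inf (wayabove x) (const_on P (A x)) \<le> A"
proof (rule le_funI)
  fix a show "inf (wayabove x) (const_on P (A x)) a \<le> A a"
  proof (cases "a \<in> P")
    case True
    have "inf (Lwaybelow P e a x) (A x) \<le> inf (A x) (e x a)"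
      using Lwaybelow_le[OF Lorder True] by (simp add: le_infI1 le_infI2)
    also have "\<dots> \<le> A a" using sigmaL_upper[OF A x True] .
    finally show ?thesis using True by (simp add: wayabove_def const_on_def)
  qed (simp add: wayabove_def)
qed

lemma SUP_wayabove: "(SUP x\<in>P. wayabove x) = const_on P top"
proof
  fix a show "(SUP x\<in>P. wayabove x) a = const_on P top a"
    using Ldirected_SUP[OF Ldirected_Lwaybelow, of a] unfolding SUP_apply
    by (simp add: wayabove_def const_on_def cong: SUP_cong)
qed

lemma inf_wayabove_le_SUP:
  assumes xy: "x \<in> P" "y \<in> P"
  shows "inf (wayabove x) (wayabove y) \<le> (SUP z\<in>P. inf (wayabove z) (const_on P (inf (e x z) (e y z))))"
proof (rule le_funI)
  fix a
  show "inf (wayabove x) (wayabove y) a \<le> (SUP z\<in>P. inf (wayabove z) (const_on P (inf (e x z) (e y z)))) a"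
    using Ldirected_inf_le[OF Ldirected_Lwaybelow xy, of a] unfolding SUP_apply
    by (simp add: wayabove_def const_on_def cong: SUP_cong)
qed

lemma ptL_eq_SUP_wayabove:
  assumes p: "p \<in> ptL P e" and A: "A \<in> sigmaL P e"
  shows "p A = (SUP x\<in>P. inf (p (wayabove x)) (A x))"
proof -
  have "p A = p (SUP x\<in>P. inf (wayabove x) (const_on P (A x)))"
    using sigmaL_eq_SUP_wayabove[OF A] by simp
  also have "\<dots> = (SUP x\<in>P. inf (p (wayabove x)) (A x))"
    using p inf_wayabove_const_on_sigmaL by (simp add: ptL_SUP ptL_inf_const_on wayabove_sigmaL)
  finally show ?thesis .
qed

lemma ptL_wayabove_le_subPt:
  assumes p: "p \<in> ptL P e" and x: "x \<in> P"
  shows "p (wayabove x) \<le> subPt P e (etaP P e x) p"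
proof (rule subPt_greatest)
  fix A assume A: "A \<in> sigmaL P e"
  have "inf (p (wayabove x)) (etaP P e x A) = p (inf (wayabove x) (const_on P (A x)))"
    using A by (simp add: etaP_apply ptL_inf_const_on[OF p wayabove_sigmaL])
  also have "\<dots> \<le> p A"
    using p inf_wayabove_const_on_sigmaL A inf_wayabove_le[OF A x] by (rule ptL_mono)
  finally show "inf (p (wayabove x)) (etaP P e x A) \<le> p A" .
qed

lemma Ldirected_ptL_wayabove:
  assumes p: "p \<in> ptL P e"
  shows "Ldirected P e (\<lambda>x. p (wayabove x))"
  unfolding Ldirected_def Lnonempty_def
proof (intro conjI ballI)
  have "(SUP x\<in>P. p (wayabove x)) = p (SUP x\<in>P. wayabove x)"
    using p wayabove_sigmaL by (simp add: ptL_SUP)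
  thus "(SUP x\<in>P. p (wayabove x)) = top" by (simp add: SUP_wayabove ptL_const_on[OF p])
next
  fix x y assume xy: "x \<in> P" "y \<in> P"
  have "inf (p (wayabove x)) (p (wayabove y)) = p (inf (wayabove x) (wayabove y))"
    using p by (simp add: ptL_inf wayabove_sigmaL)
  also have "\<dots> \<le> p (SUP z\<in>P. inf (wayabove z) (const_on P (inf (e x z) (e y z))))"
    using p inf_sigmaL[OF wayabove_sigmaL wayabove_sigmaL] _ inf_wayabove_le_SUP[OF xy]
    by (rule ptL_mono) (auto intro!: Sup_sigmaL inf_wayabove_const_on_sigmaL)
  also have "\<dots> = (SUP z\<in>P. inf (p (wayabove z)) (inf (e x z) (e y z)))"
    using p inf_wayabove_const_on_sigmaL by (simp add: ptL_SUP ptL_inf_const_on wayabove_sigmaL)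
  finally show "inf (p (wayabove x)) (p (wayabove y)) \<le> (SUP z\<in>P. inf (p (wayabove z)) (inf (e x z) (e y z)))" .
qed

lemma Ldirected_etaP_Limg:
  assumes p: "p \<in> ptL P e"
  shows "Ldirected (ptL P e) (subPt P e) (Limg P (etaP P e) (\<lambda>x. p (wayabove x)))"
proof (rule Ldirected_Limg)
  show "\<And>x. x \<in> P \<Longrightarrow> etaP P e x \<in> ptL P e" by (rule etaP_ptL)
  show "\<And>x y. x \<in> P \<Longrightarrow> y \<in> P \<Longrightarrow> e x y \<le> subPt P e (etaP P e x) (etaP P e y)" by (rule etaP_mono)
qed (rule Ldirected_ptL_wayabove[OF p])

lemma subPt_eq_INF_wayabove:
  assumes p: "p \<in> ptL P e"
  shows "subPt P e p r = (INF x\<in>P. limp (p (wayabove x)) (subPt P e (etaP P e x) r))"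
proof (rule order_antisym)
  show "subPt P e p r \<le> (INF x\<in>P. limp (p (wayabove x)) (subPt P e (etaP P e x) r))"
  proof (intro INF_greatest limpI)
    fix x assume x: "x \<in> P"
    have "inf (subPt P e p r) (p (wayabove x)) \<le> inf (subPt P e (etaP P e x) p) (subPt P e p r)"
      unfolding inf_commute[of "subPt P e p r"] by (rule inf_mono[OF ptL_wayabove_le_subPt[OF p x] order_refl])
    also have "\<dots> \<le> subPt P e (etaP P e x) r" by (rule subPt_trans)
    finally show "inf (subPt P e p r) (p (wayabove x)) \<le> subPt P e (etaP P e x) r" .
  qed
  let ?G = "INF x\<in>P. limp (p (wayabove x)) (subPt P e (etaP P e x) r)"
  show "?G \<le> subPt P e p r"
  proof (rule subPt_greatest)
    fix A assume A: "A \<in> sigmaL P e"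
    have "inf ?G (inf (p (wayabove x)) (A x)) \<le> r A" if x: "x \<in> P" for x
    proof -
      have "inf ?G (inf (p (wayabove x)) (A x))
          \<le> inf (inf (limp (p (wayabove x)) (subPt P e (etaP P e x) r)) (p (wayabove x))) (A x)"
        unfolding inf_assoc[symmetric] by (intro inf_mono order_refl INF_lower x)
      also have "\<dots> \<le> inf (subPt P e (etaP P e x) r) (A x)" by (intro inf_mono inf_limp_le order_refl)
      also have "\<dots> = inf (etaP P e x A) (subPt P e (etaP P e x) r)"
        using A by (simp add: etaP_apply inf_commute)
      also have "\<dots> \<le> r A" using A by (rule inf_subPt_le)
      finally show ?thesis .
    qed
    thus "inf ?G (p A) \<le> r A"
      by (simp add: ptL_eq_SUP_wayabove[OF p A] inf_SUP_frame SUP_least)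
  qed
qed

lemma is_Lsup_etaP_Limg:
  "p \<in> ptL P e \<Longrightarrow> is_Lsup (ptL P e) (subPt P e) (Limg P (etaP P e) (\<lambda>x. p (wayabove x))) p"
  by (simp add: is_Lsup_Limg_iff etaP_ptL subPt_eq_INF_wayabove)

definition pt_waybelow :: "(('a \<Rightarrow> 'l) \<Rightarrow> 'l) \<Rightarrow> (('a \<Rightarrow> 'l) \<Rightarrow> 'l) \<Rightarrow> 'l" where
  "pt_waybelow p q = (SUP x\<in>P. inf (subPt P e q (etaP P e x)) (p (wayabove x)))"

lemma pt_waybelow_eq_Ldown_closure:
  "pt_waybelow p = Ldown_closure (ptL P e) (subPt P e) (Limg P (etaP P e) (\<lambda>x. p (wayabove x)))"
  unfolding pt_waybelow_def Ldown_closure_def by (rule ext, rule SUP_inf_Limg[OF etaP_ptL, symmetric])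

lemma Lideal_pt_waybelow: "p \<in> ptL P e \<Longrightarrow> Lideal (ptL P e) (subPt P e) (pt_waybelow p)"
  unfolding pt_waybelow_eq_Ldown_closure by (rule Lideal_Ldown_closure[OF Lorder_ptL Ldirected_etaP_Limg])

lemma is_Lsup_pt_waybelow: "p \<in> ptL P e \<Longrightarrow> is_Lsup (ptL P e) (subPt P e) (pt_waybelow p) p"
  unfolding pt_waybelow_eq_Ldown_closure by (rule is_Lsup_Ldown_closure[OF Lorder_ptL is_Lsup_etaP_Limg])

lemma inf_pt_waybelow_le:
  assumes I: "Lideal (ptL P e) (subPt P e) I" and s: "is_Lsup (ptL P e) (subPt P e) I s"
    and q: "q \<in> ptL P e"
  shows "inf (pt_waybelow p q) (subPt P e p s) \<le> I q"
  unfolding pt_waybelow_def SUP_inf_frame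
proof (rule SUP_least)
  fix x assume x: "x \<in> P"
  have s_eq: "s = pt_Sup P e I"
    using I s by (simp add: Lideal_def is_Lsup_ptL_imp_eq_pt_Sup)
  have "inf (inf (subPt P e q (etaP P e x)) (p (wayabove x))) (subPt P e p s)
      \<le> inf (subPt P e q (etaP P e x)) (s (wayabove x))"
    unfolding inf_assoc by (rule inf_mono[OF order_refl inf_subPt_le[OF wayabove_sigmaL]])
  also have "\<dots> = (SUP r\<in>ptL P e. inf (subPt P e q (etaP P e x)) (inf (r (wayabove x)) (I r)))"
    by (simp add: s_eq pt_Sup_def wayabove_sigmaL inf_SUP_frame)
  also have "\<dots> \<le> I q"
  proof (rule SUP_least)
    fix r assume r: "r \<in> ptL P e"
    have "inf (subPt P e q (etaP P e x)) (inf (r (wayabove x)) (I r))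
        \<le> inf (inf (subPt P e q (etaP P e x)) (subPt P e (etaP P e x) r)) (I r)"
      unfolding inf_assoc by (rule inf_mono[OF order_refl inf_mono[OF ptL_wayabove_le_subPt[OF r x] order_refl]])
    also have "\<dots> \<le> inf (I r) (subPt P e q r)"
      unfolding inf_commute[of _ "I r"] by (rule inf_mono[OF order_refl subPt_trans])
    also have "\<dots> \<le> I q" using I r q by (simp add: Lideal_def Llower_def)
    finally show "inf (subPt P e q (etaP P e x)) (inf (r (wayabove x)) (I r)) \<le> I q" .
  qed
  finally show "inf (inf (subPt P e q (etaP P e x)) (p (wayabove x))) (subPt P e p s) \<le> I q" .
qed

lemma Lwaybelow_ptL:
  assumes p: "p \<in> ptL P e" and q: "q \<in> ptL P e"
  shows "Lwaybelow (ptL P e) (subPt P e) p q = pt_waybelow p q"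
proof (rule order_antisym)
  show "Lwaybelow (ptL P e) (subPt P e) p q \<le> pt_waybelow p q"
    using Lwaybelow_le_limp[OF Lideal_pt_waybelow[OF p] is_Lsup_pt_waybelow[OF p], of p q] by simp
  show "pt_waybelow p q \<le> Lwaybelow (ptL P e) (subPt P e) p q"
    unfolding Lwaybelow_def using inf_pt_waybelow_le[OF _ _ q] by (blast intro: Inf_greatest limpI)
qed

lemma cont_Ldcpo_ptL: "cont_Ldcpo (ptL P e) (subPt P e)"
  unfolding cont_Ldcpo_def cont_Lordered_def
proof (intro conjI ballI Lorder_ptL Ldcpo_ptL)
  fix p assume p: "p \<in> ptL P e"
  show "Ldirected (ptL P e) (subPt P e) (Lwaybelow (ptL P e) (subPt P e) p)"
    using Lideal_pt_waybelow[OF p] by (auto simp: Lideal_def Lwaybelow_ptL[OF p] intro: Ldirected_cong)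
  show "is_Lsup (ptL P e) (subPt P e) (Lwaybelow (ptL P e) (subPt P e) p) p"
    using is_Lsup_pt_waybelow[OF p] by (auto simp: Lwaybelow_ptL[OF p] intro: is_Lsup_cong)
qed

section \<open>The universal property\<close>

definition extension :: "'m set \<Rightarrow> ('m \<Rightarrow> 'm \<Rightarrow> 'l) \<Rightarrow> ('a \<Rightarrow> 'm) \<Rightarrow> (('a \<Rightarrow> 'l) \<Rightarrow> 'l) \<Rightarrow> 'm" where
  "extension M eM f p = (THE m. is_Lsup M eM (Limg P f (\<lambda>x. p (wayabove x))) m)"

context
  fixes M :: "'m set" and eM :: "'m \<Rightarrow> 'm \<Rightarrow> 'l" and f :: "'a \<Rightarrow> 'm"
  assumes M: "Ldcpo M eM" and f: "scott_cont P e M eM f"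
begin

lemma is_Lsup_extension:
  assumes p: "p \<in> ptL P e"
  shows "is_Lsup M eM (Limg P f (\<lambda>x. p (wayabove x))) (extension M eM f p)"
proof -
  have "Ldirected M eM (Limg P f (\<lambda>x. p (wayabove x)))"
  proof (rule Ldirected_Limg)
    show "\<And>x y. x \<in> P \<Longrightarrow> y \<in> P \<Longrightarrow> e x y \<le> eM (f x) (f y)"
      by (rule scott_cont_mono[OF Lorder Ldcpo_Lorder[OF M] f])
  qed (simp_all add: scott_cont_in[OF f] Ldirected_ptL_wayabove[OF p])
  then obtain m where m: "is_Lsup M eM (Limg P f (\<lambda>x. p (wayabove x))) m"
    using M by (auto simp: Ldcpo_def)
  thus ?thesis unfolding extension_def by (rule theI) (rule is_Lsup_unique[OF Ldcpo_Lorder[OF M] _ m])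
qed

lemma extension_in: "p \<in> ptL P e \<Longrightarrow> extension M eM f p \<in> M"
  by (rule is_Lsup_in[OF is_Lsup_extension])

lemma extension_order_eq:
  "p \<in> ptL P e \<Longrightarrow> m \<in> M \<Longrightarrow> eM (extension M eM f p) m = (INF x\<in>P. limp (p (wayabove x)) (eM (f x) m))"
  using is_Lsup_extension by (simp add: is_Lsup_Limg_iff scott_cont_in[OF f])

lemma extension_etaP:
  assumes x: "x \<in> P"
  shows "extension M eM f (etaP P e x) = f x"
proof -
  have "(\<lambda>y. etaP P e x (wayabove y)) = Lwaybelow P e x"
    unfolding etaP_apply[OF wayabove_sigmaL] using x by (simp add: wayabove_def)
  hence "is_Lsup M eM (Limg P f (Lwaybelow P e x)) (extension M eM f (etaP P e x))"
    using is_Lsup_extension[OF etaP_ptL[OF x]] by simp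
  moreover have "is_Lsup M eM (Limg P f (Lwaybelow P e x)) (f x)"
    using f Ldirected_Lwaybelow[OF x] is_Lsup_Lwaybelow[OF x] by (simp add: scott_cont_def)
  ultimately show ?thesis by (rule is_Lsup_unique[OF Ldcpo_Lorder[OF M]])
qed

lemma scott_cont_extension: "scott_cont (ptL P e) (subPt P e) M eM (extension M eM f)"
  unfolding scott_cont_def
proof (intro conjI allI impI ballI extension_in)
  fix D s assume "Ldirected (ptL P e) (subPt P e) D \<and> is_Lsup (ptL P e) (subPt P e) D s"
  hence D: "Ldirected (ptL P e) (subPt P e) D" and s: "is_Lsup (ptL P e) (subPt P e) D s" by auto
  have s_eq: "s = pt_Sup P e D" using D s by (rule is_Lsup_ptL_imp_eq_pt_Sup)
  have "eM (extension M eM f s) m = (INF q\<in>ptL P e. limp (D q) (eM (extension M eM f q) m))"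
    if m: "m \<in> M" for m
  proof -
    have "eM (extension M eM f s) m = (INF x\<in>P. limp (s (wayabove x)) (eM (f x) m))"
      using extension_order_eq[OF is_Lsup_in[OF s] m] .
    also have "\<dots> = (INF x\<in>P. limp (SUP q\<in>ptL P e. inf (q (wayabove x)) (D q)) (eM (f x) m))"
      by (simp add: s_eq pt_Sup_def wayabove_sigmaL)
    also have "\<dots> = (INF q\<in>ptL P e. INF x\<in>P. limp (D q) (limp (q (wayabove x)) (eM (f x) m)))"
      by (subst INF_commute) (simp add: limp_SUP_left limp_inf_left[symmetric] inf_commute)
    also have "\<dots> = (INF q\<in>ptL P e. limp (D q) (eM (extension M eM f q) m))"
      using m by (simp add: extension_order_eq limp_INF_right)
    finally show ?thesis .
  qed
  thus "is_Lsup M eM (Limg (ptL P e) (extension M eM f) D) (extension M eM f s)"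
    using is_Lsup_in[OF s] by (simp add: is_Lsup_Limg_iff extension_in)
qed

lemma extension_unique:
  assumes h: "scott_cont (ptL P e) (subPt P e) M eM h" and hf: "\<And>x. x \<in> P \<Longrightarrow> h (etaP P e x) = f x"
    and p: "p \<in> ptL P e"
  shows "h p = extension M eM f p"
proof (rule Lorder_eqI[OF Ldcpo_Lorder[OF M]])
  note hM = scott_cont_in[OF h]
  show "h p \<in> M" using p by (rule hM)
  show "extension M eM f p \<in> M" using p by (rule extension_in)
  fix m assume m: "m \<in> M"
  have "is_Lsup M eM (Limg (ptL P e) h (Limg P (etaP P e) (\<lambda>x. p (wayabove x)))) (h p)"
    using h Ldirected_etaP_Limg[OF p] is_Lsup_etaP_Limg[OF p] by (simp add: scott_cont_def)
  hence "eM (h p) m = Lsub (ptL P e) (Limg P (etaP P e) (\<lambda>x. p (wayabove x))) (\<lambda>q. eM (h q) m)"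
    using m hM by (simp add: is_Lsup_Limg_iff Lsub_def)
  also have "\<dots> = (INF x\<in>P. limp (p (wayabove x)) (eM (f x) m))"
    by (simp add: Lsub_Limg etaP_ptL hf)
  also have "\<dots> = eM (extension M eM f p) m" using p m by (rule extension_order_eq[symmetric])
  finally show "eM (h p) m = eM (extension M eM f p) m" .
qed

end

end

theorem theorem6p5:
  fixes P :: "'a set" and e :: "'a \<Rightarrow> 'a \<Rightarrow> 'l::frame"
  assumes "cont_Lordered P e"
  shows "directed_completion P e (ptL P e) (subPt P e) (etaP P e) TYPE('m)"
proof -
  interpret continuous_Lordered_set P e using assms by unfold_locales
  show ?thesis unfolding directed_completion_def
  proof (intro conjI cont_Ldcpo_ptL scott_cont_etaP allI impI)
    fix M :: "'m set" and eM f
    assume "cont_Ldcpo M eM \<and> scott_cont P e M eM f"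
    hence M: "Ldcpo M eM" and f: "scott_cont P e M eM f" by (auto simp: cont_Ldcpo_def)
    show "\<exists>g. scott_cont (ptL P e) (subPt P e) M eM g \<and> (\<forall>x\<in>P. g (etaP P e x) = f x) \<and>
           (\<forall>h. scott_cont (ptL P e) (subPt P e) M eM h \<and> (\<forall>x\<in>P. h (etaP P e x) = f x) \<longrightarrow>
              (\<forall>q\<in>ptL P e. h q = g q))"
      using scott_cont_extension[OF M f] extension_etaP[OF M f] extension_unique[OF M f] by blast
  qed
qed

end
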